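(* Let $F$ be a forest and $G$ be a graph, both on $n$ vertices. Let $\mathrm{comp}(F)$ be the number of components of $F$ that contain at least one edge, and let $\ell(F)$ be the number of vertices of $F$ of degree $1$. If $$3\Delta(G)+\ell(F)-2\,\mathrm{comp}(F)<n,$$ then $F$ and $G$ pack.
   Context: All graphs are finite and simple; $\Delta(G)$ is the maximum degree of $G$. For graphs $G$ and $H$ with $|V(G)|\ge |V(H)|$, we say $G$ and $H$ pack if there is an injective function $f:V(H)\to V(G)$ such that for every edge $xy\in E(H)$, $f(x)f(y)\notin E(G)$ (equivalently, both can be embedded in $K_{|V(G)|}$ with no edge in common). *)

theory Defs
  imports Main
begin

definition graph :: "'a set \<Rightarrow> 'a set set \<Rightarrow> bool" where
  "graph V E \<longleftrightarrow> finite V \<and> (\<forall>e\<in>E. \<exists>x y. x \<noteq> y \<and> x \<in> V \<and> y \<in> V \<and> e = {x, y})"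

definition degree :: "'a set set \<Rightarrow> 'a \<Rightarrow> nat" where
  "degree E v = card {e\<in>E. v \<in> e}"

definition max_degree :: "'a set \<Rightarrow> 'a set set \<Rightarrow> nat" where
  "max_degree V E = Max (insert 0 (degree E ` V))"

definition is_cycle :: "'a set set \<Rightarrow> 'a list \<Rightarrow> bool" where
  "is_cycle E vs \<longleftrightarrow> length vs \<ge> 3 \<and> distinct vs \<and>
     (\<forall>i < length vs - 1. {vs ! i, vs ! Suc i} \<in> E) \<and> {last vs, hd vs} \<in> E"

definition forest :: "'a set \<Rightarrow> 'a set set \<Rightarrow> bool" where
  "forest V E \<longleftrightarrow> graph V E \<and> (\<nexists>vs. is_cycle E vs)"

definition conn_rel :: "'a set \<Rightarrow> 'a set set \<Rightarrow> ('a \<times> 'a) set" where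
  "conn_rel V E = (Id_on V \<union> {(x, y). {x, y} \<in> E \<and> x \<in> V \<and> y \<in> V})\<^sup>*"

definition components :: "'a set \<Rightarrow> 'a set set \<Rightarrow> 'a set set" where
  "components V E = V // conn_rel V E"

definition comp_nontrivial :: "'a set \<Rightarrow> 'a set set \<Rightarrow> nat" where
  "comp_nontrivial V E = card {C \<in> components V E. \<exists>e\<in>E. e \<subseteq> C}"

definition leaves :: "'a set \<Rightarrow> 'a set set \<Rightarrow> nat" where
  "leaves V E = card {v\<in>V. degree E v = 1}"

definition packs :: "'a set \<Rightarrow> 'a set set \<Rightarrow> 'b set \<Rightarrow> 'b set set \<Rightarrow> bool" where
  "packs VG EG VH EH \<longleftrightarrow> (\<exists>f. inj_on f VH \<and> f ` VH \<subseteq> VG \<and>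
     (\<forall>x\<in>VH. \<forall>y\<in>VH. {x, y} \<in> EH \<longrightarrow> {f x, f y} \<notin> EG))"

end

theory Submission
  imports Defs "HOL-Combinatorics.Transposition"
begin

text \<open>Write \<open>s(F)\<close> for the degree excess \<open>\<Sum>\<^sub>v max 0 (d(v) - 2)\<close>. A forest satisfies
  \<open>s(F) + 2 comp(F) \<le> \<ell>(F)\<close> (strip pendant edges one at a time), so it suffices to pack \<open>F\<close> into \<open>G\<close>
  whenever \<open>3\<Delta>(G) + s(F) < n\<close>. Remove a pendant edge \<open>uw\<close> (\<open>u\<close> a leaf) and pack the rest by
  induction; \<open>s\<close> does not increase. If the packing \<open>f\<close> sends \<open>uw\<close> onto an edge of \<open>G\<close>, exchange
  the images of \<open>u\<close> and of a vertex \<open>x\<close> such that \<open>f x\<close> is neither \<open>f w\<close> nor adjacent to it and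
  no neighbour of \<open>x\<close> is sent into the neighbourhood of \<open>f u\<close>. The first condition excludes at
  most \<open>\<Delta> + 1\<close> vertices; the second excludes the neighbours of at most \<open>\<Delta>\<close> vertices, one of
  them \<open>w\<close>, which counted through degrees are at most \<open>2\<Delta> - 1 + s(F)\<close>.\<close>

section \<open>Graphs, degrees and neighbourhoods\<close>

lemma graph_edgeE:
  assumes "graph V E" "e \<in> E"
  obtains x y where "x \<noteq> y" "x \<in> V" "y \<in> V" "e = {x, y}"
  using assms unfolding graph_def by blast

lemma graph_doubleton_edgeD:
  assumes "graph V E" "{a, b} \<in> E"
  shows "a \<noteq> b" "a \<in> V" "b \<in> V"
  using graph_edgeE[OF assms] by (metis doubleton_eq_iff)+

lemma graph_finite_edges: "graph V E \<Longrightarrow> finite E"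
  unfolding graph_def by (rule finite_subset[of E "Pow V"]) auto

lemma graph_mono: "graph V E \<Longrightarrow> E' \<subseteq> E \<Longrightarrow> graph V E'"
  unfolding graph_def by blast

lemma is_cycle_mono: "is_cycle E' vs \<Longrightarrow> E' \<subseteq> E \<Longrightarrow> is_cycle E vs"
  unfolding is_cycle_def by blast

lemma forest_mono: "forest V E \<Longrightarrow> E' \<subseteq> E \<Longrightarrow> forest V E'"
  unfolding forest_def using graph_mono is_cycle_mono by blast

lemma degree_pos: "finite E \<Longrightarrow> e \<in> E \<Longrightarrow> v \<in> e \<Longrightarrow> 1 \<le> degree E v"
  unfolding degree_def using card_gt_0_iff[of "{e \<in> E. v \<in> e}"] by fastforce

lemma degree_Diff_edge:
  assumes "finite E" "e \<in> E"
  shows "degree (E - {e}) v = degree E v - (if v \<in> e then 1 else 0)"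
proof -
  have "{e' \<in> E - {e}. v \<in> e'} = {e' \<in> E. v \<in> e'} - {e}" by auto
  then show ?thesis
    unfolding degree_def using assms by (simp add: card_Diff_singleton_if)
qed

definition neighbours :: "'a set set \<Rightarrow> 'a \<Rightarrow> 'a set" where
  "neighbours E p = {q. {p, q} \<in> E}"

lemma neighbours_subset: "graph V E \<Longrightarrow> neighbours E p \<subseteq> V"
  unfolding neighbours_def by (auto dest: graph_doubleton_edgeD(3))

lemma card_neighbours_le_degree: "finite E \<Longrightarrow> card (neighbours E p) \<le> degree E p"
  unfolding neighbours_def degree_def
  by (rule card_inj_on_le[of "\<lambda>q. {p, q}"]) (auto simp: inj_on_def doubleton_eq_iff)

lemma card_neighbours_le_max_degree:
  assumes "graph V E" "p \<in> V"
  shows "card (neighbours E p) \<le> max_degree V E"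
proof -
  have "degree E p \<le> max_degree V E"
    unfolding max_degree_def using assms(1,2) by (intro Max_ge) (auto simp: graph_def)
  then show ?thesis
    using card_neighbours_le_degree[OF graph_finite_edges[OF assms(1)], of p] by linarith
qed

definition degree_excess :: "'a set \<Rightarrow> 'a set set \<Rightarrow> nat" where
  "degree_excess V E = (\<Sum>v\<in>V. degree E v - 2)"

lemma sum_degree_le_degree_excess:
  assumes "finite V" "Y \<subseteq> V"
  shows "(\<Sum>y\<in>Y. degree E y) \<le> 2 * card Y + degree_excess V E"
proof -
  have "(\<Sum>y\<in>Y. degree E y) \<le> (\<Sum>y\<in>Y. 2 + (degree E y - 2))" by (rule sum_mono) simp
  also have "\<dots> = 2 * card Y + (\<Sum>y\<in>Y. degree E y - 2)" unfolding sum.distrib by simp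
  also have "\<dots> \<le> 2 * card Y + degree_excess V E"
    unfolding degree_excess_def using assms by (simp add: sum_mono2)
  finally show ?thesis .
qed

section \<open>Components containing an edge\<close>

lemma sym_conn_rel: "sym (conn_rel V E)"
  unfolding conn_rel_def by (intro sym_rtrancl) (auto simp: sym_def insert_commute)

lemma trans_conn_rel: "trans (conn_rel V E)"
  unfolding conn_rel_def by (rule trans_rtrancl)

lemma conn_rel_edge: "{a, b} \<in> E \<Longrightarrow> a \<in> V \<Longrightarrow> b \<in> V \<Longrightarrow> (a, b) \<in> conn_rel V E"
  unfolding conn_rel_def by (rule r_into_rtrancl) auto

lemma conn_rel_mono: "E' \<subseteq> E \<Longrightarrow> conn_rel V E' \<subseteq> conn_rel V E"
  unfolding conn_rel_def by (rule rtrancl_mono) auto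

lemma conn_rel_Image_eq: "(a, b) \<in> conn_rel V E \<Longrightarrow> conn_rel V E `` {a} = conn_rel V E `` {b}"
  using sym_conn_rel[of V E] trans_conn_rel[of V E] unfolding sym_def trans_def by blast

lemma conn_rel_Image_edge:
  assumes "graph V E" "e \<in> E" "a \<in> e"
  shows "conn_rel V E `` e = conn_rel V E `` {a}"
proof -
  obtain x y where e: "e = {x, y}" "x \<in> V" "y \<in> V"
    using graph_edgeE[OF assms(1,2)] by metis
  have xy: "conn_rel V E `` {x} = conn_rel V E `` {y}"
    using assms(2) e by (intro conn_rel_Image_eq conn_rel_edge) auto
  have "conn_rel V E `` {x, y} = conn_rel V E `` {x} \<union> conn_rel V E `` {y}" by blast
  then show ?thesis using xy e(1) assms(3) by (metis Un_absorb insert_iff singletonD)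
qed

lemma nontrivial_components_eq:
  assumes "graph V E"
  shows "{C \<in> components V E. \<exists>e\<in>E. e \<subseteq> C} = (\<lambda>e. conn_rel V E `` e) ` E"
proof (intro equalityI subsetI)
  fix C assume "C \<in> {C \<in> components V E. \<exists>e\<in>E. e \<subseteq> C}"
  then obtain c e where C: "C = conn_rel V E `` {c}" and "e \<in> E" "e \<subseteq> C"
    unfolding components_def quotient_def by blast
  then obtain x y where e: "e = {x, y}" using graph_edgeE[OF assms] by metis
  then have "(c, x) \<in> conn_rel V E" using C \<open>e \<subseteq> C\<close> by blast
  then have "C = conn_rel V E `` {x}" using C conn_rel_Image_eq by metis
  also have "\<dots> = conn_rel V E `` e" using conn_rel_Image_edge[OF assms \<open>e \<in> E\<close>, of x] e by simp
  finally show "C \<in> (\<lambda>e. conn_rel V E `` e) ` E" using \<open>e \<in> E\<close> by blast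
next
  fix C assume "C \<in> (\<lambda>e. conn_rel V E `` e) ` E"
  then obtain e where "e \<in> E" "C = conn_rel V E `` e" by blast
  moreover obtain x y where e: "e = {x, y}" "x \<in> V" "y \<in> V"
    using graph_edgeE[OF assms \<open>e \<in> E\<close>] by metis
  ultimately have C: "C = conn_rel V E `` {x}" using conn_rel_Image_edge[OF assms] by simp
  have "C \<in> components V E" unfolding components_def quotient_def using C e(2) by blast
  moreover have "e \<subseteq> C"
    using C e conn_rel_edge[of x y E V] \<open>e \<in> E\<close> by (auto simp: conn_rel_def)
  ultimately show "C \<in> {C \<in> components V E. \<exists>e\<in>E. e \<subseteq> C}" using \<open>e \<in> E\<close> by blast
qed

lemma comp_nontrivial_eq_card:
  "graph V E \<Longrightarrow> comp_nontrivial V E = card ((\<lambda>e. conn_rel V E `` e) ` E)"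
  unfolding comp_nontrivial_def by (simp add: nontrivial_components_eq)

text \<open>The class of an edge in the larger graph is determined by its class in the subgraph.\<close>

lemma card_conn_rel_Image_subgraph_le:
  assumes "finite E'" "E' \<subseteq> E"
  shows "card ((\<lambda>e. conn_rel V E `` e) ` E') \<le> card ((\<lambda>e. conn_rel V E' `` e) ` E')"
proof -
  have "conn_rel V E `` (conn_rel V E' `` e) = conn_rel V E `` e" for e
  proof
    show "conn_rel V E `` (conn_rel V E' `` e) \<subseteq> conn_rel V E `` e"
      using conn_rel_mono[OF assms(2)] trans_conn_rel[of V E] unfolding trans_def by blast
    show "conn_rel V E `` e \<subseteq> conn_rel V E `` (conn_rel V E' `` e)"
      by (auto simp: conn_rel_def)
  qed
  then have "(\<lambda>e. conn_rel V E `` e) ` E' = (\<lambda>D. conn_rel V E `` D) ` (\<lambda>e. conn_rel V E' `` e) ` E'"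
    by (simp add: image_image)
  then show ?thesis using assms(1) by (simp add: card_image_le)
qed

section \<open>Pendant edges of forests\<close>

definition is_path :: "'a set set \<Rightarrow> 'a list \<Rightarrow> bool" where
  "is_path E vs \<longleftrightarrow> distinct vs \<and> (\<forall>i < length vs - 1. {vs ! i, vs ! Suc i} \<in> E)"

lemma is_path_Cons:
  assumes "is_path E vs" "vs \<noteq> []" "z \<notin> set vs" "{z, hd vs} \<in> E"
  shows "is_path E (z # vs)"
  unfolding is_path_def
proof (intro conjI allI impI)
  show "distinct (z # vs)" using assms(1,3) by (simp add: is_path_def)
  fix i assume "i < length (z # vs) - 1"
  then show "{(z # vs) ! i, (z # vs) ! Suc i} \<in> E"
    using assms by (cases i) (auto simp: is_path_def hd_conv_nth)
qed

lemma is_path_take: "is_path E vs \<Longrightarrow> is_path E (take k vs)"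
  unfolding is_path_def by auto

lemma is_path_is_cycle: "is_path E vs \<Longrightarrow> 3 \<le> length vs \<Longrightarrow> {last vs, hd vs} \<in> E \<Longrightarrow> is_cycle E vs"
  unfolding is_path_def is_cycle_def by blast

locale pendant_edge =
  fixes V :: "'a set" and E :: "'a set set" and u w :: 'a
  assumes graph: "graph V E"
    and edge: "{u, w} \<in> E"
    and pendant: "{e \<in> E. u \<in> e} = {{u, w}}"

text \<open>The first vertex of a longest path in a forest is a leaf: a further neighbour off the path
  would extend the path, and one on the path would close a cycle.\<close>

lemma forest_pendant_edge_exists:
  assumes "forest V E" "E \<noteq> {}"
  obtains u w where "pendant_edge V E u w"
proof -
  have G: "graph V E" and acyclic: "\<And>vs. \<not> is_cycle E vs"
    using assms(1) by (auto simp: forest_def)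
  define P where "P vs \<longleftrightarrow> is_path E vs \<and> set vs \<subseteq> V \<and> 2 \<le> length vs" for vs
  obtain a b where "{a, b} \<in> E" using assms(2) G by (metis all_not_in_conv graph_edgeE)
  then have "P [a, b]" using graph_doubleton_edgeD[OF G] by (auto simp: P_def is_path_def)
  moreover have "length vs < Suc (card V)" if "P vs" for vs
    using that G card_mono[of V "set vs"] distinct_card[of vs]
    by (auto simp: P_def is_path_def graph_def)
  ultimately obtain vs where "P vs" and longest: "\<And>ys. P ys \<Longrightarrow> length ys \<le> length vs"
    using Lattices_Big.ex_has_greatest_nat[of P "[a, b]" length "Suc (card V)"] by blast
  then obtain u w rest where vs: "vs = u # w # rest"
    by (auto simp: P_def numeral_2_eq_2 Suc_le_length_iff)
  have path: "is_path E vs" and "set vs \<subseteq> V" using \<open>P vs\<close> by (auto simp: P_def)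
  have uw: "{u, w} \<in> E" using path vs by (auto simp: is_path_def)
  have "e = {u, w}" if "e \<in> E" "u \<in> e" for e
  proof -
    obtain z where e: "e = {u, z}" "z \<in> V" "z \<noteq> u"
      using graph_edgeE[OF G \<open>e \<in> E\<close>] \<open>u \<in> e\<close> by (metis insert_commute insertE singletonD)
    have "z \<in> set vs"
    proof (rule ccontr)
      assume "z \<notin> set vs"
      then have "P (z # vs)"
        using is_path_Cons[OF path] \<open>set vs \<subseteq> V\<close> e \<open>e \<in> E\<close> vs by (auto simp: P_def insert_commute)
      then show False using longest by fastforce
    qed
    then obtain i where i: "i < length vs" "vs ! i = z" by (auto simp: in_set_conv_nth)
    have "i = 1"
    proof (rule ccontr)
      assume "i \<noteq> 1"
      then have "2 \<le> i" using i e(3) vs by (cases i) auto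
      moreover have "last (take (Suc i) vs) = z" "hd (take (Suc i) vs) = u"
        using i vs by (auto simp: last_conv_nth)
      ultimately have "is_cycle E (take (Suc i) vs)"
        using is_path_is_cycle[OF is_path_take[OF path]] i \<open>e \<in> E\<close> e by (auto simp: insert_commute)
      then show False using acyclic by blast
    qed
    then show ?thesis using i e vs by simp
  qed
  then have "pendant_edge V E u w" using G uw unfolding pendant_edge_def by blast
  then show thesis by (rule that)
qed

lemma forest_pendant_induct[consumes 1, case_names no_edges pendant]:
  assumes "forest V E"
    and "P {}"
    and "\<And>E u w. forest V E \<Longrightarrow> pendant_edge V E u w \<Longrightarrow> P (E - {{u, w}}) \<Longrightarrow> P E"
  shows "P E"
  using assms(1)
proof (induction "card E" arbitrary: E rule: less_induct)
  case less
  show ?case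
  proof (cases "E = {}")
    case False
    then obtain u w where uw: "pendant_edge V E u w"
      using forest_pendant_edge_exists[OF less.prems] by blast
    interpret pendant_edge V E u w by (fact uw)
    have "card (E - {{u, w}}) < card E"
      using card_Diff1_less[OF graph_finite_edges[OF graph] edge] .
    moreover have "forest V (E - {{u, w}})" using forest_mono[OF less.prems Diff_subset] .
    ultimately have "P (E - {{u, w}})" by (rule less.hyps)
    then show ?thesis by (rule assms(3)[OF less.prems uw])
  qed (use assms(2) in simp)
qed

context pendant_edge
begin

lemma finite_edges: "finite E"
  using graph_finite_edges[OF graph] .

lemma pendant_edge_vertices: "u \<noteq> w" "u \<in> V" "w \<in> V"
  using graph_doubleton_edgeD[OF graph edge] by auto

lemma degree_leaf: "degree E u = 1"
  unfolding degree_def pendant by simp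

lemma degree_neighbour_pos: "1 \<le> degree E w"
  using degree_pos[OF finite_edges edge] by simp

lemma degree_remove: "degree (E - {{u, w}}) v = degree E v - (if v = u \<or> v = w then 1 else 0)"
  using degree_Diff_edge[OF finite_edges edge] by simp

lemma degree_excess_remove:
  "degree_excess V E = degree_excess V (E - {{u, w}}) + (if 3 \<le> degree E w then 1 else 0)"
proof -
  have "degree E v - 2 =
      (degree (E - {{u, w}}) v - 2) + (if v = w then (if 3 \<le> degree E w then 1 else 0) else 0)" for v
    using degree_remove[of v] degree_leaf pendant_edge_vertices by auto
  then have "degree_excess V E = degree_excess V (E - {{u, w}}) +
      (\<Sum>v\<in>V. if v = w then (if 3 \<le> degree E w then 1 else 0) else 0)"
    unfolding degree_excess_def by (simp add: sum.distrib)
  then show ?thesis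
    using pendant_edge_vertices graph by (simp add: graph_def)
qed

lemma leaves_remove:
  "leaves V (E - {{u, w}}) + (if degree E w = 1 then 2 else 1)
    = leaves V E + (if degree E w = 2 then 1 else 0)"
proof -
  define L where "L E' = {v \<in> V. degree E' v = 1}" for E'
  have fin: "finite (L E')" for E' using graph by (simp add: L_def graph_def)
  have "L (E - {{u, w}}) - {u, w} = L E - {u, w}"
    using degree_remove by (auto simp: L_def)
  moreover have "L E \<inter> {u, w} = (if degree E w = 1 then {u, w} else {u})"
    using degree_leaf pendant_edge_vertices by (auto simp: L_def)
  moreover have "L (E - {{u, w}}) \<inter> {u, w} = (if degree E w = 2 then {w} else {})"
    using degree_remove degree_leaf degree_neighbour_pos pendant_edge_vertices
    by (auto simp: L_def)
  ultimately show ?thesis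
    unfolding leaves_def L_def[symmetric]
    using card_Int_Diff[OF fin, of "E - {{u, w}}" "{u, w}"] card_Int_Diff[OF fin, of E "{u, w}"]
      pendant_edge_vertices
    by (simp split: if_splits)
qed

lemma comp_nontrivial_remove:
  "comp_nontrivial V E \<le> comp_nontrivial V (E - {{u, w}}) + (if degree E w = 1 then 1 else 0)"
proof -
  let ?R = "conn_rel V E" and ?E' = "E - {{u, w}}"
  let ?classes = "(\<lambda>e. ?R `` e) ` ?E'"
  have classes_le: "card ?classes \<le> comp_nontrivial V ?E'"
    unfolding comp_nontrivial_eq_card[OF graph_mono[OF graph Diff_subset]]
    using finite_edges by (intro card_conn_rel_Image_subgraph_le) auto
  have "E = insert {u, w} ?E'" using edge by blast
  then have "comp_nontrivial V E = card (insert (?R `` {u, w}) ?classes)"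
    using comp_nontrivial_eq_card[OF graph] by (metis image_insert)
  also have "\<dots> \<le> card ?classes + (if degree E w = 1 then 1 else 0)"
  proof (cases "degree E w = 1")
    case True
    then show ?thesis using finite_edges by (simp add: card_insert_if)
  next
    case False
    have "{e \<in> E. w \<in> e} \<noteq> {{u, w}}"
    proof
      assume "{e \<in> E. w \<in> e} = {{u, w}}"
      then have "degree E w = 1" by (simp add: degree_def)
      with False show False ..
    qed
    then obtain e where "e \<in> ?E'" "w \<in> e" using edge by blast
    then have "?R `` {u, w} = ?R `` e"
      using conn_rel_Image_edge[OF graph] edge by (metis DiffD1 insertCI)
    then have "?R `` {u, w} \<in> ?classes" using \<open>e \<in> ?E'\<close> by blast
    then show ?thesis by (simp add: insert_absorb)
  qed
  also have "\<dots> \<le> comp_nontrivial V ?E' + (if degree E w = 1 then 1 else 0)"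
    using classes_le by (rule add_right_mono)
  finally show ?thesis .
qed

end

text \<open>In a forest, every vertex of degree \<open>d \<ge> 3\<close> forces \<open>d - 2\<close> extra leaves, and every
  component with an edge has two leaves of its own.\<close>

lemma degree_excess_comp_nontrivial_le_leaves:
  assumes "forest V E"
  shows "degree_excess V E + 2 * comp_nontrivial V E \<le> leaves V E"
  using assms
proof (induction rule: forest_pendant_induct)
  case no_edges
  then show ?case by (simp add: degree_excess_def degree_def comp_nontrivial_def)
next
  case (pendant E u w)
  interpret pendant_edge V E u w by fact
  show ?case
    using pendant.IH degree_excess_remove leaves_remove comp_nontrivial_remove
      degree_neighbour_pos
    by (simp split: if_splits)
qed

section \<open>Packing along pendant edges\<close>

definition packing_map :: "'b set \<Rightarrow> 'b set set \<Rightarrow> 'a set \<Rightarrow> 'a set set \<Rightarrow> ('a \<Rightarrow> 'b) \<Rightarrow> bool" where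
  "packing_map VG EG V E f \<longleftrightarrow> inj_on f V \<and> f ` V \<subseteq> VG \<and> (\<forall>e\<in>E. f ` e \<notin> EG)"

lemma packs_iff_packing_map:
  assumes "graph V E"
  shows "packs VG EG V E \<longleftrightarrow> (\<exists>f. packing_map VG EG V E f)"
proof -
  have "(\<forall>e\<in>E. f ` e \<notin> EG) \<longleftrightarrow> (\<forall>x\<in>V. \<forall>y\<in>V. {x, y} \<in> E \<longrightarrow> {f x, f y} \<notin> EG)" for f
  proof (intro iffI ballI impI)
    fix x y assume "\<forall>e\<in>E. f ` e \<notin> EG" "{x, y} \<in> E"
    then show "{f x, f y} \<notin> EG" by force
  next
    fix e assume H: "\<forall>x\<in>V. \<forall>y\<in>V. {x, y} \<in> E \<longrightarrow> {f x, f y} \<notin> EG" and "e \<in> E"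
    then obtain x y where "x \<in> V" "y \<in> V" "e = {x, y}" using graph_edgeE[OF assms] by metis
    then show "f ` e \<notin> EG" using H \<open>e \<in> E\<close> by simp
  qed
  then show ?thesis unfolding packs_def packing_map_def by simp
qed

lemma packing_map_insert_edge:
  "packing_map VG EG V E f \<Longrightarrow> f ` e \<notin> EG \<Longrightarrow> packing_map VG EG V (insert e E) f"
  unfolding packing_map_def by blast

lemma card_inj_on_preimage_le: "inj_on f A \<Longrightarrow> finite S \<Longrightarrow> card {x \<in> A. f x \<in> S} \<le> card S"
  by (rule card_inj_on_le) (auto intro: inj_on_subset)

context pendant_edge
begin

lemma leaf_notin_remaining_edge: "e \<in> E - {{u, w}} \<Longrightarrow> u \<notin> e"
  using pendant by blast

lemma sum_degree_remove:
  assumes "finite Y" "w \<in> Y"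
  shows "(\<Sum>y\<in>Y. degree (E - {{u, w}}) y) + 1 \<le> (\<Sum>y\<in>Y. degree E y)"
proof -
  have "(\<Sum>y\<in>Y - {w}. degree (E - {{u, w}}) y) \<le> (\<Sum>y\<in>Y - {w}. degree E y)"
    by (rule sum_mono) (simp add: degree_remove)
  moreover have "degree (E - {{u, w}}) w + 1 = degree E w"
    using degree_remove[of w] degree_neighbour_pos by simp
  ultimately show ?thesis
    using sum.remove[OF assms, of "degree E"] sum.remove[OF assms, of "degree (E - {{u, w}})"]
    by linarith
qed

lemma card_UN_neighbours_le:
  assumes "finite Y" "Y \<subseteq> V" "w \<in> Y"
  shows "card (\<Union>y\<in>Y. neighbours (E - {{u, w}}) y) + 1 \<le> 2 * card Y + degree_excess V E"
proof -
  have "card (\<Union>y\<in>Y. neighbours (E - {{u, w}}) y) \<le> (\<Sum>y\<in>Y. card (neighbours (E - {{u, w}}) y))"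
    using assms(1) by (rule card_UN_le)
  also have "\<dots> \<le> (\<Sum>y\<in>Y. degree (E - {{u, w}}) y)"
    using finite_edges by (intro sum_mono card_neighbours_le_degree) simp
  finally show ?thesis
    using sum_degree_remove[OF assms(1,3)] sum_degree_le_degree_excess[OF _ assms(2), of E] graph
    by (simp add: graph_def)
qed

lemma packing_map_transpose:
  assumes f: "packing_map VG EG V (E - {{u, w}}) f"
    and x: "x \<in> V" "x \<noteq> u" "x \<noteq> w"
    and xw: "{f x, f w} \<notin> EG"
    and x_nbrs: "\<And>b. {x, b} \<in> E - {{u, w}} \<Longrightarrow> {f u, f b} \<notin> EG"
  shows "packing_map VG EG V E (f \<circ> transpose u x)"
  unfolding packing_map_def
proof (intro conjI ballI)
  have V: "transpose u x ` V = V" using x pendant_edge_vertices by simp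
  show "inj_on (f \<circ> transpose u x) V"
    using f V by (intro comp_inj_on) (auto simp: packing_map_def)
  show "(f \<circ> transpose u x) ` V \<subseteq> VG"
    using f unfolding image_comp[symmetric] V packing_map_def by blast
  fix e assume "e \<in> E"
  show "(f \<circ> transpose u x) ` e \<notin> EG"
  proof (cases "e = {u, w}")
    case True
    then show ?thesis using xw x pendant_edge_vertices by (simp add: insert_commute)
  next
    case False
    then have e: "e \<in> E - {{u, w}}" using \<open>e \<in> E\<close> by blast
    then have "u \<notin> e" by (rule leaf_notin_remaining_edge)
    show ?thesis
    proof (cases "x \<in> e")
      case True
      then obtain b where b: "e = {x, b}" "b \<noteq> x"
        using graph_edgeE[OF graph \<open>e \<in> E\<close>] by (metis insert_commute insertE singletonD)
      then have "(f \<circ> transpose u x) ` e = {f u, f b}" using \<open>u \<notin> e\<close> by auto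
      then show ?thesis using x_nbrs e b(1) by simp
    next
      case False
      then have "(f \<circ> transpose u x) ` e = f ` e"
        using \<open>u \<notin> e\<close> unfolding image_comp[symmetric] by simp
      then show ?thesis using f e by (simp add: packing_map_def)
    qed
  qed
qed

lemma exists_transposition_partner:
  assumes G: "graph VG EG" and f: "packing_map VG EG V (E - {{u, w}}) f"
    and fuw: "{f u, f w} \<in> EG"
    and small: "3 * max_degree VG EG + degree_excess V E < card V"
  obtains x where "x \<in> V" "x \<noteq> u" "x \<noteq> w" "{f x, f w} \<notin> EG"
    "\<And>b. {x, b} \<in> E - {{u, w}} \<Longrightarrow> {f u, f b} \<notin> EG"
proof -
  let ?D = "max_degree VG EG" and ?E' = "E - {{u, w}}"
  have inj: "inj_on f V" and fV: "f ` V \<subseteq> VG" using f by (auto simp: packing_map_def)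
  have finV: "finite V" and finVG: "finite VG" using graph G by (auto simp: graph_def)
  have fu: "f u \<in> VG" and fw: "f w \<in> VG" using fV pendant_edge_vertices by auto
  have fin_nbrs: "finite (neighbours EG p)" for p
    using finite_subset[OF neighbours_subset[OF G] finVG] .
  define B1 where "B1 = {x \<in> V. f x \<in> insert (f w) (neighbours EG (f w))}"
  define Y where "Y = {y \<in> V. f y \<in> neighbours EG (f u)}"
  define B2 where "B2 = (\<Union>y\<in>Y. neighbours ?E' y)"
  have "card B1 \<le> card (insert (f w) (neighbours EG (f w)))"
    unfolding B1_def using inj fin_nbrs by (intro card_inj_on_preimage_le) auto
  also have "\<dots> \<le> ?D + 1"
    using card_neighbours_le_max_degree[OF G fw] fin_nbrs by (simp add: card_insert_if)
  finally have card_B1: "card B1 \<le> ?D + 1" .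
  have card_Y: "card Y \<le> ?D"
    unfolding Y_def using card_inj_on_preimage_le[OF inj fin_nbrs] card_neighbours_le_max_degree[OF G fu]
    by (rule le_trans)
  have Y: "finite Y" "Y \<subseteq> V" "w \<in> Y"
    using finV fuw pendant_edge_vertices by (auto simp: Y_def neighbours_def)
  have "card (B1 \<union> B2) < card V"
    using card_Un_le[of B1 B2] card_B1 card_Y card_UN_neighbours_le[OF Y] small
    unfolding B2_def by linarith
  moreover have "B1 \<union> B2 \<subseteq> V"
    using neighbours_subset[OF graph_mono[OF graph Diff_subset]] by (auto simp: B1_def B2_def)
  then have "finite (B1 \<union> B2)" using finV by (rule finite_subset)
  ultimately have "\<not> V \<subseteq> B1 \<union> B2" using card_mono[of "B1 \<union> B2" V] by linarith
  then obtain x where x: "x \<in> V" "x \<notin> B1" "x \<notin> B2" by blast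
  show thesis
  proof (rule that)
    show "x \<in> V" by fact
    show "x \<noteq> u" "x \<noteq> w" "{f x, f w} \<notin> EG"
      using x fuw fV by (auto simp: B1_def neighbours_def insert_commute)
    fix b assume "{x, b} \<in> ?E'"
    then have "b \<notin> Y" "b \<in> V"
      using x(3) graph_doubleton_edgeD[OF graph] by (auto simp: B2_def neighbours_def insert_commute)
    then show "{f u, f b} \<notin> EG" by (simp add: Y_def neighbours_def)
  qed
qed

end

lemma packing_map_exists:
  assumes "forest V E" "graph VG EG" "card V \<le> card VG"
    and "3 * max_degree VG EG + degree_excess V E < card V"
  shows "\<exists>f. packing_map VG EG V E f"
  using assms(1,4)
proof (induction rule: forest_pendant_induct)
  case no_edges
  have "finite V" "finite VG" using assms(1,2) by (auto simp: forest_def graph_def)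
  then obtain f where "f ` V \<subseteq> VG" "inj_on f V" using card_le_inj[OF _ _ assms(3)] by blast
  then show ?case by (auto simp: packing_map_def)
next
  case (pendant E u w)
  interpret pendant_edge V E u w by fact
  obtain f where f: "packing_map VG EG V (E - {{u, w}}) f"
    using pendant.IH pendant.prems degree_excess_remove by fastforce
  show ?case
  proof (cases "{f u, f w} \<in> EG")
    case True
    then obtain x where "x \<in> V" "x \<noteq> u" "x \<noteq> w" "{f x, f w} \<notin> EG"
      "\<And>b. {x, b} \<in> E - {{u, w}} \<Longrightarrow> {f u, f b} \<notin> EG"
      using exists_transposition_partner[OF assms(2) f _ pendant.prems] by blast
    then show ?thesis using packing_map_transpose[OF f] by blast
  next
    case False
    have "insert {u, w} (E - {{u, w}}) = E" using edge by blast
    then show ?thesis using packing_map_insert_edge[OF f, of "{u, w}"] False by auto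
  qed
qed

theorem theorem8:
  fixes VF :: "'a set" and EF :: "'a set set" and VG :: "'b set" and EG :: "'b set set"
    and n :: nat
  assumes "forest VF EF" and "graph VG EG"
    and "card VF = n" and "card VG = n"
    and "3 * max_degree VG EG + leaves VF EF < n + 2 * comp_nontrivial VF EF"
  shows "packs VG EG VF EF"
proof -
  have "degree_excess VF EF + 2 * comp_nontrivial VF EF \<le> leaves VF EF"
    using degree_excess_comp_nontrivial_le_leaves[OF assms(1)] .
  then have "3 * max_degree VG EG + degree_excess VF EF < card VF"
    using assms(3,5) by linarith
  then have "\<exists>f. packing_map VG EG VF EF f"
    using packing_map_exists[OF assms(1,2)] assms(3,4) by simp
  moreover have "graph VF EF" using assms(1) by (simp add: forest_def)
  ultimately show ?thesis by (simp add: packs_iff_packing_map)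
qed

end
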